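(* Let $n\ge3$, $-2<l<0$, $1<p<\frac{n+2}{n-2}$, and let $f$ satisfy $(f_1)$, $(f_2)$, $(f_2')$. For $k>1$ and $\alpha>0$ let $r_{\alpha,k}=\inf\{r>0:u(r;\alpha)=\alpha/k\}$. Then $\lim_{\alpha\to0}r_{\alpha,k}=\infty$.
   Context: Standing hypotheses: $(f_1)$ $f\in C(0,\infty)$, $f(r)>0$ for $r>0$; $(f_2)$ $f(r)$ comparable to $r^l$ for large $r$, $-2<l<0$; $(f_2')$ $f(r)=O(r^\sigma)$ as $r\to0$, $\sigma>-2$. For $\alpha>0$, $u(r;\alpha)$ is the unique solution of (1.4) $u''+\frac{n-1}{r}u'+f(r)(u^+)^p=0$, $u(0;\alpha)=\alpha$, $u'(0;\alpha)=0$, $u^+=\max\{u,0\}$. *)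

theory Defs
  imports "HOL-Analysis.Analysis"
begin

definition is_radial_sol :: "nat \<Rightarrow> (real \<Rightarrow> real) \<Rightarrow> real \<Rightarrow> real \<Rightarrow> (real \<Rightarrow> real) \<Rightarrow> bool" where
  "is_radial_sol n f p \<alpha> u \<longleftrightarrow>
     u 0 = \<alpha> \<and>
     (\<exists>u'. u' 0 = 0 \<and> continuous_on {0..} u' \<and>
        (\<forall>r\<ge>0. (u has_real_derivative u' r) (at r within {0..})) \<and>
        (\<forall>r>0. \<exists>u''. (u' has_real_derivative u'') (at r) \<and>
                u'' + (real n - 1) / r * u' r + f r * (max (u r) 0) powr p = 0))"

end

theory Submission
  imports Defs
begin

text \<open>
  The flux r^(n-1) u' of a radial solution vanishes at 0 and has derivative
  -r^(n-1) f (u^+)^p \<le> 0, so u is nonincreasing and 0 \<le> u^+ \<le> \<alpha>. On (0,R] the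
  hypotheses give f \<le> D r^\<tau> with \<tau> = min \<sigma> 0 > -2, and integrating the flux
  equation twice yields u \<ge> \<alpha> - C \<alpha>^p on [0,R], with C independent of \<alpha>. As p > 1,
  \<alpha>^p = o(\<alpha>) for \<alpha> \<rightarrow> 0, so u stays above \<alpha>/k on [0,R] for small \<alpha>, i.e. the
  radius r(\<alpha>,k) is at least R. The level \<alpha>/k is reached at all because f \<ge> c r^l near
  infinity with l > -2: as long as u \<ge> \<alpha>/k, the same double integration gives
  u(r) \<le> M - A r^(2+l).
\<close>

locale radial_solution =
  fixes n :: nat and f :: "real \<Rightarrow> real" and p \<alpha> :: real and u u' :: "real \<Rightarrow> real"
  assumes dim: "2 \<le> n"
    and f_pos: "\<And>r. 0 < r \<Longrightarrow> 0 < f r"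
    and p_pos: "0 < p"
    and \<alpha>_pos: "0 < \<alpha>"
    and u_0: "u 0 = \<alpha>"
    and u'_0: "u' 0 = 0"
    and continuous_u: "continuous_on {0..} u"
    and continuous_u': "continuous_on {0..} u'"
    and has_deriv_u: "\<And>r. 0 < r \<Longrightarrow> (u has_real_derivative u' r) (at r)"
    and has_deriv_flux: "\<And>r. 0 < r \<Longrightarrow> ((\<lambda>s. s powr (real n - 1) * u' s) has_real_derivative
           - (r powr (real n - 1) * f r * max (u r) 0 powr p)) (at r)"

lemma is_radial_sol_imp_radial_solution:
  assumes sol: "is_radial_sol n f p \<alpha> u" and "2 \<le> n" "\<And>r. 0 < r \<Longrightarrow> 0 < f r" "0 < p" "0 < \<alpha>"
  obtains u' where "radial_solution n f p \<alpha> u u'"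
proof -
  from sol obtain u' where u_0: "u 0 = \<alpha>" and "u' 0 = 0" "continuous_on {0..} u'"
    and du: "\<And>r. 0 \<le> r \<Longrightarrow> (u has_real_derivative u' r) (at r within {0..})"
    and ode: "\<And>r. 0 < r \<Longrightarrow> \<exists>u''. (u' has_real_derivative u'') (at r) \<and>
                u'' + (real n - 1) / r * u' r + f r * max (u r) 0 powr p = 0"
    unfolding is_radial_sol_def by blast
  have du_at: "(u has_real_derivative u' r) (at r)" if "0 < r" for r
    using du[of r] that at_within_interior[of r "{0..}"] by simp
  have "((\<lambda>s. s powr (real n - 1) * u' s) has_real_derivative
           - (r powr (real n - 1) * f r * max (u r) 0 powr p)) (at r)" if r: "0 < r" for r
  proof -
    obtain u'' where du': "(u' has_real_derivative u'') (at r)"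
      and eq: "u'' + (real n - 1) / r * u' r + f r * max (u r) 0 powr p = 0"
      using ode r by blast
    have "((\<lambda>s. s powr (real n - 1) * u' s) has_real_derivative
            (real n - 1) * r powr (real n - 2) * u' r + r powr (real n - 1) * u'') (at r)"
      using DERIV_mult[OF has_real_derivative_powr[of r "real n - 1"] du'] r
      by (simp add: mult.commute)
    moreover have "r powr (real n - 2) = r powr (real n - 1) / r"
      using r powr_diff[of r "real n - 1" 1] by simp
    moreover have "u'' = - ((real n - 1) / r * u' r + f r * max (u r) 0 powr p)"
      using eq by linarith
    ultimately show ?thesis
      by (simp add: algebra_simps)
  qed
  moreover have "continuous_on {0..} u"
    using du by (intro DERIV_continuous_on) auto
  ultimately show ?thesis
    using assms u_0 \<open>u' 0 = 0\<close> \<open>continuous_on {0..} u'\<close> du_at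
    by (intro that[of u'] radial_solution.intro) auto
qed

lemma exists_powr_ge:
  fixes a r\<^sub>0 M :: real
  assumes "0 < a"
  obtains r where "r\<^sub>0 \<le> r" "M \<le> r powr a"
proof
  define r where "r = max r\<^sub>0 (max M 1 powr (1 / a))"
  show "r\<^sub>0 \<le> r"
    unfolding r_def by simp
  have "max M 1 = (max M 1 powr (1 / a)) powr a"
    using assms by (simp add: powr_powr)
  also have "\<dots> \<le> r powr a"
    unfolding r_def using assms by (intro powr_mono2) auto
  finally show "M \<le> r powr a"
    by simp
qed

lemma bounded_by_powr_on_interval:
  fixes f :: "real \<Rightarrow> real"
  assumes f_cont: "continuous_on {0<..} f" and \<delta>: "0 < \<delta>"
    and f_le_near_0: "\<And>r. 0 < r \<Longrightarrow> r < \<delta> \<Longrightarrow> f r \<le> C * r powr \<sigma>" and R: "0 < R"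
  obtains D where "0 \<le> D" "\<And>s. 0 < s \<Longrightarrow> s \<le> R \<Longrightarrow> f s \<le> D * s powr min \<sigma> 0"
proof -
  define \<tau> where "\<tau> = min \<sigma> 0"
  have "\<exists>x\<in>{\<delta>/2..max R \<delta>}. \<forall>s\<in>{\<delta>/2..max R \<delta>}. f s \<le> f x"
    using \<delta> by (intro continuous_attains_sup continuous_on_subset[OF f_cont]) auto
  then obtain M where M: "\<And>s. s \<in> {\<delta>/2..max R \<delta>} \<Longrightarrow> f s \<le> M"
    by blast
  define D where "D = \<bar>C\<bar> * \<delta> powr (\<sigma> - \<tau>) + \<bar>M\<bar> / R powr \<tau>"
  have "f s \<le> D * s powr \<tau>" if s: "0 < s" "s \<le> R" for s
  proof (cases "s < \<delta>")
    case True
    have "f s \<le> \<bar>C\<bar> * s powr \<sigma>"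
      using f_le_near_0[OF s(1) True] by (meson abs_ge_self mult_right_mono powr_ge_zero order_trans)
    also have "s powr \<sigma> = s powr (\<sigma> - \<tau>) * s powr \<tau>"
      by (simp add: powr_add[symmetric])
    also have "s powr (\<sigma> - \<tau>) \<le> \<delta> powr (\<sigma> - \<tau>)"
      using s True by (intro powr_mono2) (auto simp: \<tau>_def)
    then have "\<bar>C\<bar> * (s powr (\<sigma> - \<tau>) * s powr \<tau>) \<le> \<bar>C\<bar> * \<delta> powr (\<sigma> - \<tau>) * s powr \<tau>"
      by (simp add: mult_left_mono mult_right_mono mult.assoc)
    also have "\<dots> \<le> D * s powr \<tau>"
      unfolding D_def by (simp add: distrib_right)
    finally show ?thesis .
  next
    case False
    have "R powr \<tau> \<le> s powr \<tau>"
      using s by (simp add: \<tau>_def powr_mono2')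
    then have "\<bar>M\<bar> \<le> \<bar>M\<bar> / R powr \<tau> * s powr \<tau>"
      using R by (simp add: field_simps mult_left_mono)
    then have "f s \<le> \<bar>M\<bar> / R powr \<tau> * s powr \<tau>"
      using M[of s] s False by auto
    also have "\<dots> \<le> D * s powr \<tau>"
      unfolding D_def by (simp add: distrib_right)
    finally show ?thesis .
  qed
  then show ?thesis
    using that[of D] unfolding D_def \<tau>_def by auto
qed

lemma eventually_powr_mult_less_at_right_0:
  fixes p Q \<epsilon> :: real
  assumes p: "1 < p" and \<epsilon>: "0 < \<epsilon>"
  shows "\<forall>\<^sub>F \<alpha> in at_right 0. \<alpha> powr p * Q < \<epsilon> * \<alpha>"
proof -
  have "((\<lambda>\<alpha>. \<alpha> powr (p - 1)) \<longlongrightarrow> 0) (at_right 0)"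
    using p eventually_at_right_less[of 0]
    by (intro tendsto_zero_powrI[where b = "p - 1"] tendsto_ident_at tendsto_const) (auto elim: eventually_mono)
  then have "((\<lambda>\<alpha>. \<alpha> powr (p - 1) * Q) \<longlongrightarrow> 0) (at_right 0)"
    by (rule tendsto_mult_left_zero)
  then have "\<forall>\<^sub>F \<alpha> in at_right 0. \<alpha> powr (p - 1) * Q < \<epsilon>"
    using \<epsilon> by (rule order_tendstoD)
  with eventually_at_right_less[of 0] show ?thesis
  proof eventually_elim
    case (elim \<alpha>)
    then have "\<alpha> * (\<alpha> powr (p - 1) * Q) < \<alpha> * \<epsilon>"
      by (intro mult_strict_left_mono) auto
    then show ?case
      using powr_add[of \<alpha> 1 "p - 1"] elim by (simp add: algebra_simps)
  qed
qed

context radial_solution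
begin

lemma u'_nonpos:
  assumes "0 \<le> r"
  shows "u' r \<le> 0"
proof -
  have "r powr (real n - 1) * u' r \<le> 0 powr (real n - 1) * u' 0"
  proof (rule DERIV_nonpos_imp_decreasing_open[OF assms])
    fix s :: real assume "0 < s" "s < r"
    then have "0 \<le> s powr (real n - 1) * f s * max (u s) 0 powr p"
      using f_pos[of s] by simp
    then show "\<exists>d. ((\<lambda>s. s powr (real n - 1) * u' s) has_real_derivative d) (at s) \<and> d \<le> 0"
      using has_deriv_flux \<open>0 < s\<close> by (intro exI conjI) auto
  next
    show "continuous_on {0..r} (\<lambda>s. s powr (real n - 1) * u' s)"
      using dim by (intro continuous_intros continuous_on_powr' continuous_on_subset[OF continuous_u']) auto
  qed
  then show ?thesis
    using assms u'_0 by (cases "r = 0") (auto simp: mult_le_0_iff)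
qed

lemma u_le_\<alpha>:
  assumes "0 \<le> r"
  shows "u r \<le> \<alpha>"
proof -
  have "u r \<le> u 0"
  proof (rule DERIV_nonpos_imp_decreasing_open[OF assms])
    show "\<And>s. 0 < s \<Longrightarrow> s < r \<Longrightarrow> \<exists>d. (u has_real_derivative d) (at s) \<and> d \<le> 0"
      using has_deriv_u u'_nonpos by fastforce
    show "continuous_on {0..r} u"
      using continuous_u by (rule continuous_on_subset) auto
  qed
  then show ?thesis
    using u_0 by simp
qed

lemma u'_lower_bound:
  assumes D: "0 \<le> D" and \<tau>: "-2 < \<tau>" and f_le: "\<And>s. 0 < s \<Longrightarrow> s \<le> R \<Longrightarrow> f s \<le> D * s powr \<tau>"
    and r: "0 < r" "r \<le> R"
  shows "- (D * \<alpha> powr p) * r powr (1 + \<tau>) / (real n + \<tau>) \<le> u' r"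
proof -
  define K where "K = D * \<alpha> powr p"
  have n\<tau>: "0 < real n + \<tau>"
    using dim \<tau> by linarith
  define h where "h s = s powr (real n - 1) * u' s + K * s powr (real n + \<tau>) / (real n + \<tau>)" for s
  have source_le: "s powr (real n - 1) * f s * max (u s) 0 powr p \<le> K * s powr (real n + \<tau> - 1)"
    if s: "0 < s" "s \<le> R" for s
  proof -
    have "max (u s) 0 powr p \<le> \<alpha> powr p"
      using u_le_\<alpha>[of s] s \<alpha>_pos p_pos by (intro powr_mono2) auto
    then have "s powr (real n - 1) * f s * max (u s) 0 powr p \<le> s powr (real n - 1) * (D * s powr \<tau>) * \<alpha> powr p"
      using f_le[OF s] f_pos[of s] s D by (intro mult_mono) auto
    also have "\<dots> = K * s powr (real n + \<tau> - 1)"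
      unfolding K_def by (simp add: powr_add[symmetric] algebra_simps)
    finally show ?thesis .
  qed
  have "h 0 \<le> h r"
  proof (rule DERIV_nonneg_imp_increasing_open[of 0 r h])
    fix s :: real assume s: "0 < s" "s < r"
    have "(h has_real_derivative - (s powr (real n - 1) * f s * max (u s) 0 powr p) +
            K * ((real n + \<tau>) * s powr (real n + \<tau> - 1)) / (real n + \<tau>)) (at s)"
      unfolding h_def using s
      by (intro DERIV_add DERIV_cdivide DERIV_cmult has_deriv_flux has_real_derivative_powr) auto
    then show "\<exists>d. (h has_real_derivative d) (at s) \<and> 0 \<le> d"
      using source_le[of s] s r n\<tau> by (intro exI conjI) auto
  next
    show "continuous_on {0..r} h"
      unfolding h_def using dim n\<tau>
      by (intro continuous_intros continuous_on_powr' continuous_on_subset[OF continuous_u']) auto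
  qed (use r in simp)
  then have "r powr (real n - 1) * (- K * r powr (1 + \<tau>) / (real n + \<tau>)) \<le> r powr (real n - 1) * u' r"
    using u'_0 r by (simp add: h_def powr_add[symmetric] algebra_simps)
  moreover have "0 < r powr (real n - 1)"
    using r by simp
  ultimately show ?thesis
    unfolding K_def by (rule mult_left_le_imp_le)
qed

lemma u_lower_bound:
  assumes D: "0 \<le> D" and \<tau>: "-2 < \<tau>" and f_le: "\<And>s. 0 < s \<Longrightarrow> s \<le> R \<Longrightarrow> f s \<le> D * s powr \<tau>"
    and r: "0 \<le> r" "r \<le> R"
  shows "\<alpha> - \<alpha> powr p * (D * r powr (2 + \<tau>) / ((real n + \<tau>) * (2 + \<tau>))) \<le> u r"
proof -
  define K where "K = D * \<alpha> powr p"
  have n\<tau>: "0 < real n + \<tau>"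
    using dim \<tau> by linarith
  define g where "g s = u s + K * s powr (2 + \<tau>) / ((real n + \<tau>) * (2 + \<tau>))" for s
  have "g 0 \<le> g r"
  proof (rule DERIV_nonneg_imp_increasing_open[of 0 r g])
    fix s :: real assume s: "0 < s" "s < r"
    have "(g has_real_derivative u' s + K * ((2 + \<tau>) * s powr (2 + \<tau> - 1)) / ((real n + \<tau>) * (2 + \<tau>))) (at s)"
      unfolding g_def using s
      by (intro DERIV_add DERIV_cdivide DERIV_cmult has_deriv_u has_real_derivative_powr) auto
    moreover have "K * ((2 + \<tau>) * s powr (2 + \<tau> - 1)) / ((real n + \<tau>) * (2 + \<tau>)) = K * s powr (1 + \<tau>) / (real n + \<tau>)"
      using \<tau> by (simp add: add_diff_eq)
    moreover have "- K * s powr (1 + \<tau>) / (real n + \<tau>) \<le> u' s"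
      unfolding K_def using u'_lower_bound[OF D \<tau> f_le, of s] s r by simp
    ultimately show "\<exists>d. (g has_real_derivative d) (at s) \<and> 0 \<le> d"
      by (intro exI conjI) auto
  next
    show "continuous_on {0..r} g"
      unfolding g_def using \<tau> n\<tau>
      by (intro continuous_intros continuous_on_powr' continuous_on_subset[OF continuous_u]) auto
  qed (use r in simp)
  then show ?thesis
    using u_0 \<tau> by (simp add: g_def K_def mult_ac)
qed

lemma Inf_level_set_ge:
  assumes D: "0 \<le> D" and \<tau>: "-2 < \<tau>" and f_le: "\<And>s. 0 < s \<Longrightarrow> s \<le> R \<Longrightarrow> f s \<le> D * s powr \<tau>"
    and small: "\<alpha> powr p * (D * R powr (2 + \<tau>) / ((real n + \<tau>) * (2 + \<tau>))) < \<alpha> - c"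
    and hit: "\<exists>r>0. u r = c"
  shows "R \<le> Inf {r. 0 < r \<and> u r = c}"
proof (rule cInf_greatest)
  show "{r. 0 < r \<and> u r = c} \<noteq> {}"
    using hit by blast
  have n\<tau>: "0 < real n + \<tau>"
    using dim \<tau> by linarith
  fix r assume r: "r \<in> {r. 0 < r \<and> u r = c}"
  show "R \<le> r"
  proof (rule ccontr)
    assume "\<not> R \<le> r"
    then have "\<alpha> powr p * (D * r powr (2 + \<tau>) / ((real n + \<tau>) * (2 + \<tau>)))
        \<le> \<alpha> powr p * (D * R powr (2 + \<tau>) / ((real n + \<tau>) * (2 + \<tau>)))"
      using D \<tau> n\<tau> r by (intro mult_left_mono divide_right_mono powr_mono2) auto
    moreover have "\<alpha> - \<alpha> powr p * (D * r powr (2 + \<tau>) / ((real n + \<tau>) * (2 + \<tau>))) \<le> u r"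
      using u_lower_bound[where R = R, OF D \<tau> f_le, of r] r \<open>\<not> R \<le> r\<close> by simp
    ultimately show False
      using small r by simp
  qed
qed

lemma u'_upper_bound_if_above:
  assumes c\<^sub>1: "0 < c\<^sub>1" and l: "1 \<le> real n + l" and R\<^sub>0: "0 < R\<^sub>0"
    and f_ge: "\<And>r. R\<^sub>0 \<le> r \<Longrightarrow> c\<^sub>1 * r powr l \<le> f r"
    and c: "0 < c" and above: "\<And>r. 0 \<le> r \<Longrightarrow> c \<le> u r"
    and r: "2 * R\<^sub>0 \<le> r"
  shows "u' r \<le> - (c\<^sub>1 * c powr p / 2 powr (real n + l)) * r powr (1 + l)"
proof -
  define B where "B = c\<^sub>1 * c powr p"
  \<comment> \<open>Integrating over [r/2, r] rather than [R0, r] gives (r/2)^(n+l) without a correction term.\<close>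
  define b where "b = r / 2"
  have b: "R\<^sub>0 \<le> b" "0 < b" "b \<le> r"
    using r R\<^sub>0 unfolding b_def by auto
  have source_ge: "B * s powr (real n - 1 + l) \<le> s powr (real n - 1) * f s * max (u s) 0 powr p"
    if s: "R\<^sub>0 \<le> s" for s
  proof -
    have "B * s powr (real n - 1 + l) = s powr (real n - 1) * (c\<^sub>1 * s powr l) * c powr p"
      unfolding B_def by (simp add: powr_add)
    also have "\<dots> \<le> s powr (real n - 1) * f s * max (u s) 0 powr p"
      using f_ge[OF s] above[of s] f_pos[of s] s R\<^sub>0 c c\<^sub>1 p_pos
      by (intro mult_mono mult_left_mono powr_mono2) auto
    finally show ?thesis .
  qed
  define w where "w s = s powr (real n - 1) * u' s + B * b powr (real n - 1 + l) * s" for s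
  have "w r \<le> w b"
  proof (rule DERIV_nonpos_imp_decreasing_open[of b r w])
    fix s :: real assume s: "b < s" "s < r"
    have "(w has_real_derivative - (s powr (real n - 1) * f s * max (u s) 0 powr p) +
            B * b powr (real n - 1 + l) * 1) (at s)"
      unfolding w_def using s b by (intro DERIV_add DERIV_cmult DERIV_ident has_deriv_flux) auto
    moreover have "B * b powr (real n - 1 + l) \<le> B * s powr (real n - 1 + l)"
      unfolding B_def using s b l c c\<^sub>1 by (intro mult_left_mono powr_mono2) auto
    ultimately show "\<exists>d. (w has_real_derivative d) (at s) \<and> d \<le> 0"
      using source_ge[of s] s b by (intro exI conjI) auto
  next
    show "continuous_on {b..r} w"
      unfolding w_def using b
      by (intro continuous_intros continuous_on_powr' continuous_on_subset[OF continuous_u']) auto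
  qed (use b in simp)
  moreover have "b powr (real n - 1) * u' b \<le> 0"
    using u'_nonpos[of b] b by (simp add: mult_nonneg_nonpos)
  moreover have "B * b powr (real n - 1 + l) * r - B * b powr (real n - 1 + l) * b = B * b powr (real n + l)"
    using powr_add[of b "real n - 1 + l" 1] b unfolding b_def by (simp add: algebra_simps)
  ultimately have "r powr (real n - 1) * u' r \<le> - B * b powr (real n + l)"
    unfolding w_def by linarith
  also have "\<dots> = r powr (real n - 1) * (- (B / 2 powr (real n + l)) * r powr (1 + l))"
    unfolding b_def using b by (simp add: powr_divide powr_add[symmetric])
  finally have "r powr (real n - 1) * u' r \<le> r powr (real n - 1) * (- (B / 2 powr (real n + l)) * r powr (1 + l))" .
  moreover have "0 < r powr (real n - 1)"
    using b by simp
  ultimately show ?thesis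
    unfolding B_def by (rule mult_left_le_imp_le)
qed

lemma attains_level:
  assumes c\<^sub>1: "0 < c\<^sub>1" and l: "-2 < l" "1 \<le> real n + l" and R\<^sub>0: "0 < R\<^sub>0"
    and f_ge: "\<And>r. R\<^sub>0 \<le> r \<Longrightarrow> c\<^sub>1 * r powr l \<le> f r"
    and c: "0 < c" "c < \<alpha>"
  shows "\<exists>r>0. u r = c"
proof (rule ccontr)
  assume no_hit: "\<not> (\<exists>r>0. u r = c)"
  have above: "c \<le> u r" if r: "0 \<le> r" for r
  proof (rule ccontr)
    assume "\<not> c \<le> u r"
    moreover have "continuous_on {0..r} u"
      using continuous_u by (rule continuous_on_subset) auto
    ultimately obtain s where "0 \<le> s" "s \<le> r" "u s = c"
      using IVT2'[of u r c 0] r u_0 c by auto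
    then show False
      using no_hit u_0 c by (cases "s = 0") auto
  qed
  define A where "A = c\<^sub>1 * c powr p / 2 powr (real n + l)"
  have A: "0 < A"
    unfolding A_def using c\<^sub>1 c by simp
  define g where "g s = u s + A * s powr (2 + l) / (2 + l)" for s
  have g_decreasing: "g r \<le> g (2 * R\<^sub>0)" if r: "2 * R\<^sub>0 \<le> r" for r
  proof (rule DERIV_nonpos_imp_decreasing_open[of "2 * R\<^sub>0" r g])
    fix s :: real assume s: "2 * R\<^sub>0 < s" "s < r"
    have "(g has_real_derivative u' s + A * ((2 + l) * s powr (2 + l - 1)) / (2 + l)) (at s)"
      unfolding g_def using s R\<^sub>0
      by (intro DERIV_add DERIV_cdivide DERIV_cmult has_deriv_u has_real_derivative_powr) auto
    moreover have "A * ((2 + l) * s powr (2 + l - 1)) / (2 + l) = A * s powr (1 + l)"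
      using l by (simp add: add_diff_eq)
    moreover have "u' s \<le> - A * s powr (1 + l)"
      unfolding A_def using u'_upper_bound_if_above[OF c\<^sub>1 l(2) R\<^sub>0 f_ge c(1) above, of s] s by simp
    ultimately show "\<exists>d. (g has_real_derivative d) (at s) \<and> d \<le> 0"
      by (intro exI conjI) auto
  next
    show "continuous_on {2 * R\<^sub>0..r} g"
      unfolding g_def using R\<^sub>0 l
      by (intro continuous_intros continuous_on_powr' continuous_on_subset[OF continuous_u]) auto
  qed (use r in simp)
  have "0 < 2 + l"
    using l by simp
  then obtain r where r: "2 * R\<^sub>0 \<le> r" "(2 + l) / A * g (2 * R\<^sub>0) \<le> r powr (2 + l)"
    by (rule exists_powr_ge)
  then have "A * r powr (2 + l) / (2 + l) \<ge> g (2 * R\<^sub>0)"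
    using A l by (simp add: field_simps)
  with g_decreasing[OF r(1)] have "u r \<le> 0"
    unfolding g_def by simp
  with above[of r] r R\<^sub>0 c show False
    by simp
qed

end

lemma eventually_Inf_level_set_ge:
  fixes u :: "real \<Rightarrow> real \<Rightarrow> real"
  assumes sol: "\<And>\<alpha>. 0 < \<alpha> \<Longrightarrow> \<exists>u'. radial_solution n f p \<alpha> (u \<alpha>) u'"
    and p: "1 < p" and k: "1 < k"
    and D: "0 \<le> D" and \<tau>: "-2 < \<tau>" and f_le: "\<And>s. 0 < s \<Longrightarrow> s \<le> R \<Longrightarrow> f s \<le> D * s powr \<tau>"
    and hit: "\<And>\<alpha>. 0 < \<alpha> \<Longrightarrow> \<exists>r>0. u \<alpha> r = \<alpha> / k"
  shows "\<forall>\<^sub>F \<alpha> in at_right 0. R \<le> Inf {r. 0 < r \<and> u \<alpha> r = \<alpha> / k}"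
proof -
  have "\<forall>\<^sub>F \<alpha> in at_right 0. \<alpha> powr p * (D * R powr (2 + \<tau>) / ((real n + \<tau>) * (2 + \<tau>))) < (1 - 1 / k) * \<alpha>"
    using p k by (intro eventually_powr_mult_less_at_right_0) auto
  with eventually_at_right_less[of 0] show ?thesis
  proof eventually_elim
    case (elim \<alpha>)
    obtain u' where sol_\<alpha>: "radial_solution n f p \<alpha> (u \<alpha>) u'"
      using sol elim(1) by blast
    have "\<alpha> powr p * (D * R powr (2 + \<tau>) / ((real n + \<tau>) * (2 + \<tau>))) < \<alpha> - \<alpha> / k"
      using elim(2) by (simp add: algebra_simps)
    then show ?case
      using radial_solution.Inf_level_set_ge[OF sol_\<alpha> D \<tau> f_le] hit[OF elim(1)] by simp
  qed
qed

theorem lemma3p5: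
  fixes n :: nat and l p \<sigma> k :: real and f :: "real \<Rightarrow> real"
    and u :: "real \<Rightarrow> real \<Rightarrow> real"
  assumes n: "n \<ge> 3"
    and l: "-2 < l" "l < 0"
    and p: "1 < p" "p < (real n + 2) / (real n - 2)"
    and f1: "continuous_on {0<..} f" "\<forall>r>0. f r > 0"
    and f2: "\<exists>c1 c2 R. 0 < c1 \<and> 0 < c2 \<and> 0 < R \<and>
               (\<forall>r\<ge>R. c1 * r powr l \<le> f r \<and> f r \<le> c2 * r powr l)"
    and f2': "\<sigma> > -2" "\<exists>C \<delta>. 0 < \<delta> \<and> (\<forall>r. 0 < r \<and> r < \<delta> \<longrightarrow> f r \<le> C * r powr \<sigma>)"
    and sol: "\<forall>\<alpha>>0. is_radial_sol n f p \<alpha> (u \<alpha>)"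
    and k: "k > 1"
  shows "filterlim (\<lambda>\<alpha>. Inf {r. r > 0 \<and> u \<alpha> r = \<alpha> / k}) at_top (at_right 0)"
proof -
  obtain c\<^sub>1 R\<^sub>0 where c\<^sub>1: "0 < c\<^sub>1" and R\<^sub>0: "0 < R\<^sub>0" and f_ge: "\<And>r. R\<^sub>0 \<le> r \<Longrightarrow> c\<^sub>1 * r powr l \<le> f r"
    using f2 by blast
  obtain C \<delta> where \<delta>: "0 < \<delta>" and f_le_near_0: "\<And>r. 0 < r \<Longrightarrow> r < \<delta> \<Longrightarrow> f r \<le> C * r powr \<sigma>"
    using f2'(2) by blast
  have solution: "\<exists>u'. radial_solution n f p \<alpha> (u \<alpha>) u'" if "0 < \<alpha>" for \<alpha>
    using is_radial_sol_imp_radial_solution[of n f p \<alpha> "u \<alpha>"] sol n f1(2) p(1) that by force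
  have hit: "\<exists>r>0. u \<alpha> r = \<alpha> / k" if \<alpha>: "0 < \<alpha>" for \<alpha>
  proof -
    obtain u' where "radial_solution n f p \<alpha> (u \<alpha>) u'"
      using solution[OF \<alpha>] by blast
    moreover have "1 \<le> real n + l" "0 < \<alpha> / k" "\<alpha> / k < \<alpha>"
      using n l \<alpha> k by (auto simp: field_simps)
    ultimately show ?thesis
      using radial_solution.attains_level[OF _ c\<^sub>1 l(1) _ R\<^sub>0 f_ge] by blast
  qed
  show ?thesis
    unfolding filterlim_at_top
  proof
    fix Z :: real
    define R where "R = max Z 1"
    define \<tau> where "\<tau> = min \<sigma> 0"
    have "0 < R" "-2 < \<tau>"
      using f2'(1) unfolding R_def \<tau>_def by auto
    then obtain D where D: "0 \<le> D" and f_le: "\<And>s. 0 < s \<Longrightarrow> s \<le> R \<Longrightarrow> f s \<le> D * s powr \<tau>"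
      using bounded_by_powr_on_interval[OF f1(1) \<delta> f_le_near_0] unfolding \<tau>_def by blast
    have "\<forall>\<^sub>F \<alpha> in at_right 0. R \<le> Inf {r. 0 < r \<and> u \<alpha> r = \<alpha> / k}"
      by (rule eventually_Inf_level_set_ge[OF solution p(1) k D \<open>-2 < \<tau>\<close> f_le hit])
    then show "\<forall>\<^sub>F \<alpha> in at_right 0. Z \<le> Inf {r. r > 0 \<and> u \<alpha> r = \<alpha> / k}"
      by (rule eventually_mono) (simp add: R_def)
  qed
qed

end
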